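(* Assume $V=L$. Let $\zeta\in\Xi$, $X\in\mathrm{IPS}_\zeta$, let $\eta\in\Xi$ with $\eta\subseteq\zeta$, and let $i\in\zeta\setminus\eta$. Then there exist $x,y\in X$ with $x\restriction\eta=y\restriction\eta$ but $x(i)\neq y(i)$.
   Context: $T$ is the set of all nonempty finite sequences of countable ordinals, partially ordered by strict extension $\subset$. $\Xi$ is the set of all at most countable $\xi\subseteq T$ that are initial segments ($j\subset i\in\xi\Rightarrow j\in\xi$). $D=2^\omega$ is the Cantor space and, for $\xi\in\Xi$, $D^\xi$ is the product of $\xi$ copies of $D$ with the product topology. For $\eta\subseteq\xi$ in $\Xi$ and $x\in D^\xi$, $x\restriction\eta$ is the restriction. For $\zeta\in\Xi$, $\mathrm{IPS}_\zeta$ is the set of all $X\subseteq D^\zeta$ such that there is a homeomorphism $H$ of $D^\zeta$ onto $X$ satisfying, for all $x_0,x_1\in D^\zeta$ and all $\xi\in\Xi$ with $\xi\subseteq\zeta$: $x_0\restriction\xi=x_1\restriction\xi\iff H(x_0)\restriction\xi=H(x_1)\restriction\xi$. *)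

theory Defs
  imports "HOL-Analysis.Analysis" "HOL-Library.Sublist"
begin

text \<open>Countable ordinals: the field of the successor cardinal of natLeq, i.e. a
  well-order of order type omega_1 (elements are sets of naturals).\<close>
definition cOrd :: "nat set set" where
  "cOrd = Field (cardSuc natLeq)"

definition Tset :: "nat set list set" where
  "Tset = {s. s \<noteq> [] \<and> set s \<subseteq> cOrd}"

definition Xi :: "nat set list set set" where
  "Xi = {xi. xi \<subseteq> Tset \<and> countable xi \<and>
             (\<forall>i\<in>xi. \<forall>j\<in>Tset. strict_prefix j i \<longrightarrow> j \<in> xi)}"

definition Dtop :: "(nat \<Rightarrow> bool) topology" where
  "Dtop = product_topology (\<lambda>_. discrete_topology (UNIV :: bool set)) UNIV"

text \<open>D^xi, product of xi copies of D (points are extensional functions on xi).\<close>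
definition Dpow :: "nat set list set \<Rightarrow> (nat set list \<Rightarrow> (nat \<Rightarrow> bool)) topology" where
  "Dpow xi = product_topology (\<lambda>_. Dtop) xi"

definition IPS :: "nat set list set \<Rightarrow> (nat set list \<Rightarrow> (nat \<Rightarrow> bool)) set set" where
  "IPS zeta = {X. X \<subseteq> topspace (Dpow zeta) \<and>
     (\<exists>H. homeomorphic_map (Dpow zeta) (subtopology (Dpow zeta) X) H \<and>
        (\<forall>x0\<in>topspace (Dpow zeta). \<forall>x1\<in>topspace (Dpow zeta). \<forall>xi\<in>Xi. xi \<subseteq> zeta \<longrightarrow>
           (restrict x0 xi = restrict x1 xi \<longleftrightarrow> restrict (H x0) xi = restrict (H x1) xi)))}"

end

theory Submission
  imports Defs
begin

text \<open>Move a point of \<open>D\<^sup>\<zeta>\<close> at the single coordinate \<open>i\<close>. The two points agree on \<open>\<eta>\<close> and on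
  the finite initial segment \<open>S\<close> of strict predecessors of \<open>i\<close>, but not on \<open>S \<union> {i}\<close>.
  Both \<open>S\<close> and \<open>S \<union> {i}\<close> belong to \<open>\<Xi>\<close>, so the map witnessing \<open>X \<in> IPS\<^sub>\<zeta>\<close> transfers these three
  facts to the images; agreeing on \<open>S\<close> but not on \<open>S \<union> {i}\<close>, the images differ at \<open>i\<close>.
  The argument does not use \<open>V = L\<close>.\<close>

definition strict_preds :: "nat set list \<Rightarrow> nat set list set" where
  "strict_preds i = {j \<in> Tset. strict_prefix j i}"

lemma finite_strict_preds: "finite (strict_preds i)"
  unfolding strict_preds_def
  by (rule finite_subset[of _ "set (prefixes i)"]) (auto simp: in_set_prefixes)

lemma strict_preds_in_Xi: "strict_preds i \<in> Xi"
  using finite_strict_preds unfolding Xi_def strict_preds_def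
  by (auto intro: countable_finite dest: prefix_order.strict_trans)

lemma insert_strict_preds_in_Xi:
  assumes "i \<in> Tset"
  shows "insert i (strict_preds i) \<in> Xi"
  using finite_strict_preds assms unfolding Xi_def strict_preds_def
  by (auto intro: countable_finite dest: prefix_order.strict_trans)

lemma strict_preds_subset:
  assumes "zeta \<in> Xi" and "i \<in> zeta"
  shows "strict_preds i \<subseteq> zeta"
  using assms unfolding Xi_def strict_preds_def by auto

lemma restrict_insert_eq_iff:
  "restrict f (insert i S) = restrict g (insert i S) \<longleftrightarrow>
     f i = g i \<and> restrict f S = restrict g S"
  by (auto simp: fun_eq_iff restrict_def)

lemma topspace_Dpow: "topspace (Dpow zeta) = PiE zeta (\<lambda>_. UNIV)"
  unfolding Dpow_def Dtop_def by (simp add: topspace_product_topology)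

lemma restriction_preserving_map_separates_coordinate:
  assumes "zeta \<in> Xi" and "i \<in> zeta"
    and preserves: "\<And>xi. xi \<in> Xi \<Longrightarrow> xi \<subseteq> zeta \<Longrightarrow>
           restrict a xi = restrict b xi \<longleftrightarrow> restrict (H a) xi = restrict (H b) xi"
    and "a i \<noteq> b i" and "restrict a (strict_preds i) = restrict b (strict_preds i)"
  shows "H a i \<noteq> H b i"
proof -
  have "i \<in> Tset" using assms(1,2) unfolding Xi_def by auto
  have preds_zeta: "strict_preds i \<subseteq> zeta" "insert i (strict_preds i) \<subseteq> zeta"
    using strict_preds_subset[OF assms(1,2)] assms(2) by auto
  have "restrict a (insert i (strict_preds i)) \<noteq> restrict b (insert i (strict_preds i))"
    using \<open>a i \<noteq> b i\<close> by (simp add: restrict_insert_eq_iff)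
  then have "restrict (H a) (insert i (strict_preds i)) \<noteq> restrict (H b) (insert i (strict_preds i))"
    using preserves[OF insert_strict_preds_in_Xi[OF \<open>i \<in> Tset\<close>] preds_zeta(2)] by simp
  moreover have "restrict (H a) (strict_preds i) = restrict (H b) (strict_preds i)"
    using preserves[OF strict_preds_in_Xi preds_zeta(1)] assms(5) by simp
  ultimately show ?thesis by (simp add: restrict_insert_eq_iff)
qed

theorem lemma2p6:
  assumes "zeta \<in> Xi" and "X \<in> IPS zeta" and "eta \<in> Xi" and "eta \<subseteq> zeta"
    and "i \<in> zeta - eta"
  shows "\<exists>x\<in>X. \<exists>y\<in>X. restrict x eta = restrict y eta \<and> x i \<noteq> y i"
proof -
  obtain H where hom: "homeomorphic_map (Dpow zeta) (subtopology (Dpow zeta) X) H"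
    and preserves: "\<And>x0 x1 xi. x0 \<in> topspace (Dpow zeta) \<Longrightarrow> x1 \<in> topspace (Dpow zeta) \<Longrightarrow>
           xi \<in> Xi \<Longrightarrow> xi \<subseteq> zeta \<Longrightarrow>
           restrict x0 xi = restrict x1 xi \<longleftrightarrow> restrict (H x0) xi = restrict (H x1) xi"
    and "X \<subseteq> topspace (Dpow zeta)"
    using assms(2) unfolding IPS_def by blast
  then have H_into_X: "H a \<in> X" if "a \<in> topspace (Dpow zeta)" for a
    using homeomorphic_imp_surjective_map[OF hom] that by auto
  have "i \<in> zeta" "i \<notin> eta" using assms(5) by auto
  define a :: "nat set list \<Rightarrow> nat \<Rightarrow> bool" where "a = restrict (\<lambda>_ _. False) zeta"
  define b where "b = a(i := (\<lambda>_. True))"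
  have ab: "a \<in> topspace (Dpow zeta)" "b \<in> topspace (Dpow zeta)"
    using \<open>i \<in> zeta\<close> unfolding topspace_Dpow a_def b_def by auto
  have "restrict a eta = restrict b eta"
    using \<open>i \<notin> eta\<close> unfolding b_def by auto
  then have "restrict (H a) eta = restrict (H b) eta"
    using preserves[OF ab assms(3,4)] by simp
  moreover have "H a i \<noteq> H b i"
  proof (rule restriction_preserving_map_separates_coordinate[where H = H, OF assms(1) \<open>i \<in> zeta\<close>])
    show "a i \<noteq> b i" using \<open>i \<in> zeta\<close> unfolding a_def b_def by (simp add: fun_eq_iff)
    show "restrict a (strict_preds i) = restrict b (strict_preds i)"
      unfolding b_def strict_preds_def by auto
  qed (use preserves[OF ab] in simp)
  ultimately show ?thesis using H_into_X ab by blast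
qed

end
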